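(* Let $G$ be any of the calculi $\mathbf{GE},\mathbf{GM},\mathbf{GMC},\mathbf{GEN},\mathbf{GMN},\mathbf{GK},\mathbf{GCE},\mathbf{GCM},\mathbf{GCMC},\mathbf{GCEN},\mathbf{GCMN},\mathbf{GCK},\mathbf{GCKID},\mathbf{GCKCEM},\mathbf{GCKCEMID}$. If $G$ has the modal uniform Lyndon interpolation property (MULIP), then $G$ has ULIP. Likewise, if $G$ has the modal uniform interpolation property (MUIP), then $G$ has UIP.
   Context: Formulas: atoms, $\bot$, $\wedge,\vee,\to$ and unary $\Box$ (for $\mathbf{GE},\dots,\mathbf{GK}$) or binary $\triangleright$ (for the calculi named $\mathbf{GC}\dots$). Weight: $w(\bot)=w(p)=0$, $w(A\odot B)=w(A)+w(B)+1$ for $\odot\in\{\wedge,\vee,\to,\triangleright\}$, $w(\Box A)=w(A)+1$; the weight of a sequent is the sum of the weights of its formulas; $S$ is lower than $T$ if its weight is smaller. Positive/negative variables: $V^+(p)=\{p\}$, $V^-(p)=\varnothing$; $V^\pm(\bot)=\varnothing$; $V^\pm(\phi\odot\psi)=V^\pm(\phi)\cup V^\pm(\psi)$ for $\odot\in\{\wedge,\vee\}$; $V^+(\phi\to\psi)=V^-(\phi)\cup V^+(\psi)$, $V^-(\phi\to\psi)=V^+(\phi)\cup V^-(\psi)$; $V^\pm(\Box\phi)=V^\pm(\phi)$; $V^+(\phi\triangleright\psi)=V^-(\phi)\cup V^+(\psi)$, $V^-(\phi\triangleright\psi)=V^+(\phi)\cup V^-(\psi)$; $V=V^+\cup V^-$;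 $p^\circ$-free means $p\notin V^\circ$, $\diamond$ is the sign opposite to $\circ\in\{+,-\}$. For $S=\Gamma\Rightarrow\Delta$: $V^+(S)=\bigcup_{\gamma\in\Gamma}V^-(\gamma)\cup\bigcup_{\delta\in\Delta}V^+(\delta)$, $V^-(S)$ dually; $(\Gamma\Rightarrow\Delta)\cdot(\Pi\Rightarrow\Lambda)=(\Gamma,\Pi\Rightarrow\Delta,\Lambda)$. Calculi: $\mathbf{G3W}$ has axioms $\Gamma,p\Rightarrow p,\Delta$ ($p$ atomic), $\Gamma,\bot\Rightarrow\Delta$, the rules $L\wedge$ (from $\Gamma,\phi,\psi\Rightarrow\Delta$ infer $\Gamma,\phi\wedge\psi\Rightarrow\Delta$), $R\wedge$ (from $\Gamma\Rightarrow\phi,\Delta$, $\Gamma\Rightarrow\psi,\Delta$ infer $\Gamma\Rightarrow\phi\wedge\psi,\Delta$), $L\vee$ (from $\Gamma,\phi\Rightarrow\Delta$, $\Gamma,\psi\Rightarrow\Delta$ infer $\Gamma,\phi\vee\psi\Rightarrow\Delta$), $R\vee$ (from $\Gamma\Rightarrow\phi,\psi,\Delta$ infer $\Gamma\Rightarrow\phi\vee\psi,\Delta$), $L\to$ (from $\Gamma\Rightarrow\phi,\Delta$, $\Gamma,\psi\Rightarrow\Delta$ infer $\Gamma,\phi\to\psi\Rightarrow\Delta$), $R\to$ (from $\Gamma,\phi\Rightarrow\psi,\Delta$ infer $\Gamma\Rightarrow\phi\to\psi,\Delta$), and left/right weakening. "$\alpha\Leftrightarrow\beta$" as a premise abbreviates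 $\alpha\Rightarrow\beta$ and $\beta\Rightarrow\alpha$. Modal rules: $(E)$ from $\phi\Leftrightarrow\psi$ infer $\Box\phi\Rightarrow\Box\psi$; $(M)$ from $\phi\Rightarrow\psi$ infer $\Box\phi\Rightarrow\Box\psi$; $(MC)$ ($n\ge1$) from $\phi_1,\dots,\phi_n\Rightarrow\psi$ infer $\Box\phi_1,\dots,\Box\phi_n\Rightarrow\Box\psi$; $(N)$ from $\Rightarrow\psi$ infer $\Rightarrow\Box\psi$. Conditional rules: $(CE)$ from $\phi_0\Leftrightarrow\phi_1$, $\psi_0\Leftrightarrow\psi_1$ infer $\phi_1\triangleright\psi_1\Rightarrow\phi_0\triangleright\psi_0$; $(CM)$ from $\phi_0\Leftrightarrow\phi_1$, $\psi_1\Rightarrow\psi_0$ infer the same; $(CMC)$ ($n\ge1$) from $\phi_0\Leftrightarrow\phi_i$ ($1\le i\le n$), $\psi_1,\dots,\psi_n\Rightarrow\psi_0$ infer $\phi_1\triangleright\psi_1,\dots,\phi_n\triangleright\psi_n\Rightarrow\phi_0\triangleright\psi_0$; $(CN)$ from $\Rightarrow\psi_0$ infer $\Rightarrow\phi_0\triangleright\psi_0$; $(CKID)$ (finite possibly empty $I$) from $\phi_0\Leftrightarrow\phi_i$ ($i\in I$), $\phi_0,\{\psi_i\}_{i\in I}\Rightarrow\psi_0$ infer $\{\phi_i\triangleright\psi_i\}_{i\in I}\Rightarrow\phi_0\triangleright\psi_0$; $(CKCEM)$ from $\phi_0\Leftrightarrow\phi_r$ ($r\in I\cup J$), $\{\psi_i\}_{i\in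 I}\Rightarrow\psi_0,\{\psi_j\}_{j\in J}$ infer $\{\phi_i\triangleright\psi_i\}_{i\in I}\Rightarrow\phi_0\triangleright\psi_0,\{\phi_j\triangleright\psi_j\}_{j\in J}$; $(CKCEMID)$ as $(CKCEM)$ with $\phi_0$ added to the antecedent of the last premise. $\mathbf{GE},\mathbf{GM},\mathbf{GMC}$ = $\mathbf{G3W}+(E),(M),(MC)$; $\mathbf{GEN},\mathbf{GMN},\mathbf{GK}$ = these $+(N)$; $\mathbf{GCE},\mathbf{GCM},\mathbf{GCMC},\mathbf{GCKID},\mathbf{GCKCEM},\mathbf{GCKCEMID}$ = $\mathbf{G3W}+(CE),(CM),(CMC),(CKID),(CKCEM),(CKCEMID)$; $\mathbf{GCEN},\mathbf{GCMN},\mathbf{GCK}$ = $\mathbf{GCE},\mathbf{GCM},\mathbf{GCMC}+(CN)$. The modal/conditional rules of $G$ (set $\mathcal{M}$) are its rules other than the axioms and the rules of $\mathbf{G3W}$. Interpolants: for a set $\mathcal{R}$ of rules of $G$, a uniform $\forall^\circ_p$-interpolant of $S$ w.r.t. $\mathcal{R}$ is a $p^\circ$-free formula $\theta$ with $V^\dagger(\theta)\subseteq V^\dagger(S)$ for both $\dagger$, $G\vdash S\cdot(\theta\Rightarrow)$, and such that for every $\Gamma\Rightarrow\Delta$ with $p\notin V^\diamond(\Gamma\Rightarrow\Delta)$, if $S\cdot(\Gamma\Rightarrow\Delta)$ has a $G$-derivation whose last inference is an instance of a rule in $\mathcal{R}$ then $G\vdash\Gamma\Rightarrow\theta,\Delta$.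 A uniform $\forall^\circ_p$-interpolant of $S$ (in $G$) is the same with the last condition replaced by: $G\vdash S\cdot(\Gamma\Rightarrow\Delta)$ implies $G\vdash\Gamma\Rightarrow\theta,\Delta$. $G$ has ULIP if every $S,p,\circ$ admits a uniform $\forall^\circ_p$-interpolant. $\mathcal{U}^\circ_p(S)$: every sequent lower than $S$ has a uniform $\forall^\circ_p$-interpolant in $G$. $G$ has MULIP if for every $S,p,\circ$ there is a formula $\theta$ such that, if $\mathcal{U}^\circ_p(S)$ holds, then $\theta$ is a uniform $\forall^\circ_p$-interpolant of $S$ w.r.t. $\mathcal{M}$. UIP and MUIP are defined identically with all polarities dropped ($\theta$ $p$-free, $V(\theta)\subseteq V(S)$, $\Gamma\Rightarrow\Delta$ $p$-free, $\mathcal{U}_p(S)$ accordingly). *)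

theory Defs
  imports Main "HOL-Library.Multiset"
begin

text \<open>One datatype for both languages: Box is the unary modality (calculi GE..GK),
  Cond is the binary conditional (calculi GC..). Each calculus only uses its own
  language, see lang below.\<close>

datatype fm =
    Atom nat
  | Bot
  | And fm fm
  | Or fm fm
  | Imp fm fm
  | Box fm
  | Cond fm fm

fun weight :: "fm \<Rightarrow> nat" where
  "weight (Atom p) = 0"
| "weight Bot = 0"
| "weight (And a b) = weight a + weight b + 1"
| "weight (Or a b) = weight a + weight b + 1"
| "weight (Imp a b) = weight a + weight b + 1"
| "weight (Cond a b) = weight a + weight b + 1"
| "weight (Box a) = weight a + 1"

text \<open>Polarised variables: vars True = V^+, vars False = V^-.\<close>
fun vars :: "bool \<Rightarrow> fm \<Rightarrow> nat set" where
  "vars b (Atom p) = (if b then {p} else {})"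
| "vars b Bot = {}"
| "vars b (And x y) = vars b x \<union> vars b y"
| "vars b (Or x y) = vars b x \<union> vars b y"
| "vars b (Imp x y) = vars (\<not> b) x \<union> vars b y"
| "vars b (Box x) = vars b x"
| "vars b (Cond x y) = vars (\<not> b) x \<union> vars b y"

definition allvars :: "fm \<Rightarrow> nat set" where
  "allvars x = vars True x \<union> vars False x"

type_synonym seq = "fm multiset \<times> fm multiset"

definition sweight :: "seq \<Rightarrow> nat" where
  "sweight S = (\<Sum>x\<in>#fst S. weight x) + (\<Sum>x\<in>#snd S. weight x)"

definition svars :: "bool \<Rightarrow> seq \<Rightarrow> nat set" where
  "svars b S = (\<Union>g\<in>set_mset (fst S). vars (\<not> b) g) \<union> (\<Union>d\<in>set_mset (snd S). vars b d)"

definition sallvars :: "seq \<Rightarrow> nat set" where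
  "sallvars S = svars True S \<union> svars False S"

definition sprod :: "seq \<Rightarrow> seq \<Rightarrow> seq" where
  "sprod S T = (fst S + fst T, snd S + snd T)"

datatype calculus =
    GE | GM | GMC | GEN | GMN | GK
  | GCE | GCM | GCMC | GCEN | GCMN | GCK | GCKID | GCKCEM | GCKCEMID

definition modal_calc :: "calculus \<Rightarrow> bool" where
  "modal_calc G \<longleftrightarrow> G \<in> {GE, GM, GMC, GEN, GMN, GK}"

fun in_lang :: "bool \<Rightarrow> fm \<Rightarrow> bool" where
  "in_lang m (Atom p) = True"
| "in_lang m Bot = True"
| "in_lang m (And x y) = (in_lang m x \<and> in_lang m y)"
| "in_lang m (Or x y) = (in_lang m x \<and> in_lang m y)"
| "in_lang m (Imp x y) = (in_lang m x \<and> in_lang m y)"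
| "in_lang m (Box x) = (m \<and> in_lang m x)"
| "in_lang m (Cond x y) = ((\<not> m) \<and> in_lang m x \<and> in_lang m y)"

definition lang :: "calculus \<Rightarrow> fm \<Rightarrow> bool" where
  "lang G x = in_lang (modal_calc G) x"

definition slang :: "calculus \<Rightarrow> seq \<Rightarrow> bool" where
  "slang G S \<longleftrightarrow> (\<forall>x\<in>#fst S. lang G x) \<and> (\<forall>x\<in>#snd S. lang G x)"

datatype rule =
    AxAt | AxBot | LAnd | RAnd | LOr | ROr | LImp | RImp | LW | RW
  | RE | RM | RMC | RN
  | RCE | RCM | RCMC | RCN | RCKID | RCKCEM | RCKCEMID

definition eqv :: "fm \<Rightarrow> fm \<Rightarrow> seq list" where
  "eqv a b = [({#a#}, {#b#}), ({#b#}, {#a#})]"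

inductive inst :: "rule \<Rightarrow> seq list \<Rightarrow> seq \<Rightarrow> bool" where
  axat: "inst AxAt [] (\<Gamma> + {#Atom p#}, {#Atom p#} + \<Delta>)"
| axbot: "inst AxBot [] (\<Gamma> + {#Bot#}, \<Delta>)"
| land: "inst LAnd [(\<Gamma> + {#a, b#}, \<Delta>)] (\<Gamma> + {#And a b#}, \<Delta>)"
| rand: "inst RAnd [(\<Gamma>, {#a#} + \<Delta>), (\<Gamma>, {#b#} + \<Delta>)] (\<Gamma>, {#And a b#} + \<Delta>)"
| lor: "inst LOr [(\<Gamma> + {#a#}, \<Delta>), (\<Gamma> + {#b#}, \<Delta>)] (\<Gamma> + {#Or a b#}, \<Delta>)"
| ror: "inst ROr [(\<Gamma>, {#a, b#} + \<Delta>)] (\<Gamma>, {#Or a b#} + \<Delta>)"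
| limp: "inst LImp [(\<Gamma>, {#a#} + \<Delta>), (\<Gamma> + {#b#}, \<Delta>)] (\<Gamma> + {#Imp a b#}, \<Delta>)"
| rimp: "inst RImp [(\<Gamma> + {#a#}, {#b#} + \<Delta>)] (\<Gamma>, {#Imp a b#} + \<Delta>)"
| lw: "inst LW [(\<Gamma>, \<Delta>)] (\<Gamma> + {#a#}, \<Delta>)"
| rw: "inst RW [(\<Gamma>, \<Delta>)] (\<Gamma>, {#a#} + \<Delta>)"
| e: "inst RE (eqv a b) ({#Box a#}, {#Box b#})"
| m: "inst RM [({#a#}, {#b#})] ({#Box a#}, {#Box b#})"
| mc: "as \<noteq> [] \<Longrightarrow> inst RMC [(mset as, {#b#})] (mset (map Box as), {#Box b#})"
| n: "inst RN [({#}, {#b#})] ({#}, {#Box b#})"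
| ce: "inst RCE (eqv a0 a1 @ eqv b0 b1) ({#Cond a1 b1#}, {#Cond a0 b0#})"
| cm: "inst RCM (eqv a0 a1 @ [({#b1#}, {#b0#})]) ({#Cond a1 b1#}, {#Cond a0 b0#})"
| cmc: "xs \<noteq> [] \<Longrightarrow>
        inst RCMC (concat (map (\<lambda>(a, b). eqv a0 a) xs) @ [(mset (map snd xs), {#b0#})])
                  (mset (map (\<lambda>(a, b). Cond a b) xs), {#Cond a0 b0#})"
| cn: "inst RCN [({#}, {#b0#})] ({#}, {#Cond a0 b0#})"
| ckid: "inst RCKID (concat (map (\<lambda>(a, b). eqv a0 a) xs) @ [({#a0#} + mset (map snd xs), {#b0#})])
                   (mset (map (\<lambda>(a, b). Cond a b) xs), {#Cond a0 b0#})"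
| ckcem: "inst RCKCEM (concat (map (\<lambda>(a, b). eqv a0 a) (xs @ ys))
                       @ [(mset (map snd xs), {#b0#} + mset (map snd ys))])
                  (mset (map (\<lambda>(a, b). Cond a b) xs),
                   {#Cond a0 b0#} + mset (map (\<lambda>(a, b). Cond a b) ys))"
| ckcemid: "inst RCKCEMID (concat (map (\<lambda>(a, b). eqv a0 a) (xs @ ys))
                       @ [({#a0#} + mset (map snd xs), {#b0#} + mset (map snd ys))])
                  (mset (map (\<lambda>(a, b). Cond a b) xs),
                   {#Cond a0 b0#} + mset (map (\<lambda>(a, b). Cond a b) ys))"

definition g3w_rules :: "rule set" where
  "g3w_rules = {AxAt, AxBot, LAnd, RAnd, LOr, ROr, LImp, RImp, LW, RW}"

fun modal_rules :: "calculus \<Rightarrow> rule set" where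
  "modal_rules GE = {RE}"
| "modal_rules GM = {RM}"
| "modal_rules GMC = {RMC}"
| "modal_rules GEN = {RE, RN}"
| "modal_rules GMN = {RM, RN}"
| "modal_rules GK = {RMC, RN}"
| "modal_rules GCE = {RCE}"
| "modal_rules GCM = {RCM}"
| "modal_rules GCMC = {RCMC}"
| "modal_rules GCEN = {RCE, RCN}"
| "modal_rules GCMN = {RCM, RCN}"
| "modal_rules GCK = {RCMC, RCN}"
| "modal_rules GCKID = {RCKID}"
| "modal_rules GCKCEM = {RCKCEM}"
| "modal_rules GCKCEMID = {RCKCEMID}"

definition rules :: "calculus \<Rightarrow> rule set" where
  "rules G = g3w_rules \<union> modal_rules G"

inductive derivable :: "calculus \<Rightarrow> seq \<Rightarrow> bool" for G where
  step: "r \<in> rules G \<Longrightarrow> inst r ps c \<Longrightarrow> slang G c \<Longrightarrow>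
         (\<And>s. s \<in> set ps \<Longrightarrow> derivable G s) \<Longrightarrow> derivable G c"

definition derivable_last :: "calculus \<Rightarrow> rule set \<Rightarrow> seq \<Rightarrow> bool" where
  "derivable_last G R c \<longleftrightarrow>
     slang G c \<and> (\<exists>r ps. r \<in> R \<and> r \<in> rules G \<and> inst r ps c \<and> (\<forall>s\<in>set ps. derivable G s))"

text \<open>Polarity pol: True = +, False = -; the opposite polarity is \<not> pol.\<close>

definition ULI_base :: "calculus \<Rightarrow> nat \<Rightarrow> bool \<Rightarrow> seq \<Rightarrow> fm \<Rightarrow> bool" where
  "ULI_base G p pol S \<theta> \<longleftrightarrow>
     lang G \<theta> \<and> p \<notin> vars pol \<theta> \<and>
     (\<forall>b. vars b \<theta> \<subseteq> svars b S) \<and>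
     derivable G (sprod S ({#\<theta>#}, {#}))"

definition ULI_wrt :: "calculus \<Rightarrow> rule set \<Rightarrow> nat \<Rightarrow> bool \<Rightarrow> seq \<Rightarrow> fm \<Rightarrow> bool" where
  "ULI_wrt G R p pol S \<theta> \<longleftrightarrow>
     ULI_base G p pol S \<theta> \<and>
     (\<forall>\<Gamma> \<Delta>. slang G (\<Gamma>, \<Delta>) \<longrightarrow> p \<notin> svars (\<not> pol) (\<Gamma>, \<Delta>) \<longrightarrow>
        derivable_last G R (sprod S (\<Gamma>, \<Delta>)) \<longrightarrow> derivable G (\<Gamma>, {#\<theta>#} + \<Delta>))"

definition ULI :: "calculus \<Rightarrow> nat \<Rightarrow> bool \<Rightarrow> seq \<Rightarrow> fm \<Rightarrow> bool" where
  "ULI G p pol S \<theta> \<longleftrightarrow>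
     ULI_base G p pol S \<theta> \<and>
     (\<forall>\<Gamma> \<Delta>. slang G (\<Gamma>, \<Delta>) \<longrightarrow> p \<notin> svars (\<not> pol) (\<Gamma>, \<Delta>) \<longrightarrow>
        derivable G (sprod S (\<Gamma>, \<Delta>)) \<longrightarrow> derivable G (\<Gamma>, {#\<theta>#} + \<Delta>))"

definition ULIP :: "calculus \<Rightarrow> bool" where
  "ULIP G \<longleftrightarrow> (\<forall>S p pol. slang G S \<longrightarrow> (\<exists>\<theta>. ULI G p pol S \<theta>))"

definition Ucond :: "calculus \<Rightarrow> nat \<Rightarrow> bool \<Rightarrow> seq \<Rightarrow> bool" where
  "Ucond G p pol S \<longleftrightarrow>
     (\<forall>S'. slang G S' \<longrightarrow> sweight S' < sweight S \<longrightarrow> (\<exists>\<theta>. ULI G p pol S' \<theta>))"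

definition MULIP :: "calculus \<Rightarrow> bool" where
  "MULIP G \<longleftrightarrow> (\<forall>S p pol. slang G S \<longrightarrow>
     (\<exists>\<theta>. Ucond G p pol S \<longrightarrow> ULI_wrt G (modal_rules G) p pol S \<theta>))"

definition UI_base :: "calculus \<Rightarrow> nat \<Rightarrow> seq \<Rightarrow> fm \<Rightarrow> bool" where
  "UI_base G p S \<theta> \<longleftrightarrow>
     lang G \<theta> \<and> p \<notin> allvars \<theta> \<and> allvars \<theta> \<subseteq> sallvars S \<and>
     derivable G (sprod S ({#\<theta>#}, {#}))"

definition UI_wrt :: "calculus \<Rightarrow> rule set \<Rightarrow> nat \<Rightarrow> seq \<Rightarrow> fm \<Rightarrow> bool" where
  "UI_wrt G R p S \<theta> \<longleftrightarrow>
     UI_base G p S \<theta> \<and>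
     (\<forall>\<Gamma> \<Delta>. slang G (\<Gamma>, \<Delta>) \<longrightarrow> p \<notin> sallvars (\<Gamma>, \<Delta>) \<longrightarrow>
        derivable_last G R (sprod S (\<Gamma>, \<Delta>)) \<longrightarrow> derivable G (\<Gamma>, {#\<theta>#} + \<Delta>))"

definition UI :: "calculus \<Rightarrow> nat \<Rightarrow> seq \<Rightarrow> fm \<Rightarrow> bool" where
  "UI G p S \<theta> \<longleftrightarrow>
     UI_base G p S \<theta> \<and>
     (\<forall>\<Gamma> \<Delta>. slang G (\<Gamma>, \<Delta>) \<longrightarrow> p \<notin> sallvars (\<Gamma>, \<Delta>) \<longrightarrow>
        derivable G (sprod S (\<Gamma>, \<Delta>)) \<longrightarrow> derivable G (\<Gamma>, {#\<theta>#} + \<Delta>))"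

definition UIP :: "calculus \<Rightarrow> bool" where
  "UIP G \<longleftrightarrow> (\<forall>S p. slang G S \<longrightarrow> (\<exists>\<theta>. UI G p S \<theta>))"

definition Ucond_np :: "calculus \<Rightarrow> nat \<Rightarrow> seq \<Rightarrow> bool" where
  "Ucond_np G p S \<longleftrightarrow>
     (\<forall>S'. slang G S' \<longrightarrow> sweight S' < sweight S \<longrightarrow> (\<exists>\<theta>. UI G p S' \<theta>))"

definition MUIP :: "calculus \<Rightarrow> bool" where
  "MUIP G \<longleftrightarrow> (\<forall>S p. slang G S \<longrightarrow>
     (\<exists>\<theta>. Ucond_np G p S \<longrightarrow> UI_wrt G (modal_rules G) p S \<theta>))"

end

theory Submission
  imports Defs
begin

text \<open>The interpolant of a sequent S is built by well-founded induction on S (weight, then size).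
  It is the disjunction of those candidates that are free of p: the modal interpolant of S supplied
  by MULIP (MUIP); for every G3W rule instance with conclusion S, the conjunction of the interpolants
  of its premises, which are lower than S; and \<open>\<not>q\<close> resp. q for every atom q in the antecedent
  resp. succedent of S. Given a derivation of \<open>S\<cdot>(\<Gamma> \<Rightarrow> \<Delta>)\<close> one inducts on it. A modal last
  inference is covered by the modal interpolant. A G3W inference whose principal formula lies in
  \<open>\<Gamma> \<Rightarrow> \<Delta>\<close> is repeated with the interpolant added to the succedent. If the principal formula lies
  in S, the premises are \<open>S\<^sub>i\<cdot>(\<Gamma> \<Rightarrow> \<Delta>)\<close>, so \<open>\<Gamma> \<Rightarrow> \<Delta>\<close> derives every interpolant of \<open>S\<^sub>i\<close> and
  hence their conjunction; an atomic axiom shared between S and \<open>\<Gamma> \<Rightarrow> \<Delta>\<close> is covered by \<open>\<not>q\<close>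
  or q.\<close>

section \<open>Derived rules of G3W\<close>

lemma lang_simps [simp]:
  "lang G (And a b) \<longleftrightarrow> lang G a \<and> lang G b"
  "lang G (Or a b) \<longleftrightarrow> lang G a \<and> lang G b"
  "lang G (Imp a b) \<longleftrightarrow> lang G a \<and> lang G b"
  "lang G Bot" "lang G (Atom q)"
  by (auto simp: lang_def)

lemma slang_iff: "slang G (A, B) \<longleftrightarrow> (\<forall>x\<in>#A. lang G x) \<and> (\<forall>x\<in>#B. lang G x)"
  by (simp add: slang_def)

lemma derivable_g3w:
  "r \<in> g3w_rules \<Longrightarrow> inst r ps c \<Longrightarrow> slang G c \<Longrightarrow> (\<And>s. s \<in> set ps \<Longrightarrow> derivable G s)
   \<Longrightarrow> derivable G c"
  by (rule derivable.step) (auto simp: rules_def)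

lemma derivable_atom_axiom:
  assumes "slang G (A, B)" "Atom q \<in># A" "Atom q \<in># B"
  shows "derivable G (A, B)"
proof -
  obtain A' B' where "A = add_mset (Atom q) A'" "B = add_mset (Atom q) B'"
    using assms(2,3) by (meson multi_member_split)
  then show ?thesis
    using assms(1) by (auto intro: derivable_g3w[OF _ inst.axat[simplified]] simp: g3w_rules_def)
qed

lemma derivable_bot_axiom:
  assumes "slang G (A, B)" "Bot \<in># A"
  shows "derivable G (A, B)"
proof -
  obtain A' where "A = add_mset Bot A'"
    using assms(2) by (meson multi_member_split)
  then show ?thesis
    using assms(1) by (auto intro: derivable_g3w[OF _ inst.axbot[simplified]] simp: g3w_rules_def)
qed

lemma derivable_LAnd:
  "derivable G (add_mset a (add_mset b A), B) \<Longrightarrow> slang G (add_mset (And a b) A, B)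
   \<Longrightarrow> derivable G (add_mset (And a b) A, B)"
  by (rule derivable_g3w[OF _ inst.land[of A a b B, simplified]]) (auto simp: g3w_rules_def)

lemma derivable_RAnd:
  "derivable G (A, add_mset a B) \<Longrightarrow> derivable G (A, add_mset b B)
   \<Longrightarrow> slang G (A, add_mset (And a b) B) \<Longrightarrow> derivable G (A, add_mset (And a b) B)"
  by (rule derivable_g3w[OF _ inst.rand[of A a B b, simplified]]) (auto simp: g3w_rules_def)

lemma derivable_LOr:
  "derivable G (add_mset a A, B) \<Longrightarrow> derivable G (add_mset b A, B)
   \<Longrightarrow> slang G (add_mset (Or a b) A, B) \<Longrightarrow> derivable G (add_mset (Or a b) A, B)"
  by (rule derivable_g3w[OF _ inst.lor[of A a B b, simplified]]) (auto simp: g3w_rules_def)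

lemma derivable_ROr:
  "derivable G (A, add_mset a (add_mset b B)) \<Longrightarrow> slang G (A, add_mset (Or a b) B)
   \<Longrightarrow> derivable G (A, add_mset (Or a b) B)"
  by (rule derivable_g3w[OF _ inst.ror[of A a b B, simplified]]) (auto simp: g3w_rules_def)

lemma derivable_LImp:
  "derivable G (A, add_mset a B) \<Longrightarrow> derivable G (add_mset b A, B)
   \<Longrightarrow> slang G (add_mset (Imp a b) A, B) \<Longrightarrow> derivable G (add_mset (Imp a b) A, B)"
  by (rule derivable_g3w[OF _ inst.limp[of A a B b, simplified]]) (auto simp: g3w_rules_def)

lemma derivable_RImp:
  "derivable G (add_mset a A, add_mset b B) \<Longrightarrow> slang G (A, add_mset (Imp a b) B)
   \<Longrightarrow> derivable G (A, add_mset (Imp a b) B)"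
  by (rule derivable_g3w[OF _ inst.rimp[of A a b B, simplified]]) (auto simp: g3w_rules_def)

lemma derivable_LW:
  "derivable G (A, B) \<Longrightarrow> slang G (add_mset a A, B) \<Longrightarrow> derivable G (add_mset a A, B)"
  by (rule derivable_g3w[OF _ inst.lw[of A B a, simplified]]) (auto simp: g3w_rules_def)

lemma derivable_RW:
  "derivable G (A, B) \<Longrightarrow> slang G (A, add_mset a B) \<Longrightarrow> derivable G (A, add_mset a B)"
  by (rule derivable_g3w[OF _ inst.rw[of A B a, simplified]]) (auto simp: g3w_rules_def)

text \<open>\<open>Conj []\<close> is \<open>\<top>\<close>: the candidate contributed by an axiom instance with conclusion S.\<close>

fun Conj :: "fm list \<Rightarrow> fm" where
  "Conj [] = Imp Bot Bot"
| "Conj (x # xs) = And x (Conj xs)"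

fun Disj :: "fm list \<Rightarrow> fm" where
  "Disj [] = Bot"
| "Disj (x # xs) = Or x (Disj xs)"

lemma lang_Conj [simp]: "lang G (Conj xs) \<longleftrightarrow> (\<forall>x\<in>set xs. lang G x)"
  by (induction xs) auto

lemma lang_Disj [simp]: "lang G (Disj xs) \<longleftrightarrow> (\<forall>x\<in>set xs. lang G x)"
  by (induction xs) auto

lemma vars_Conj [simp]: "vars b (Conj xs) = (\<Union>x\<in>set xs. vars b x)"
  by (induction xs arbitrary: b) auto

lemma vars_Disj [simp]: "vars b (Disj xs) = (\<Union>x\<in>set xs. vars b x)"
  by (induction xs) auto

lemma derivable_Conj_right:
  "slang G (A, add_mset (Conj xs) B) \<Longrightarrow> (\<And>x. x \<in> set xs \<Longrightarrow> derivable G (A, add_mset x B))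
   \<Longrightarrow> derivable G (A, add_mset (Conj xs) B)"
proof (induction xs)
  case Nil
  then show ?case
    by (auto intro!: derivable_RImp intro: derivable_bot_axiom simp: slang_iff)
next
  case (Cons y ys)
  then show ?case
    by (auto intro!: derivable_RAnd simp: slang_iff)
qed

lemma derivable_Conj_left:
  "x \<in> set xs \<Longrightarrow> slang G (add_mset (Conj xs) A, B) \<Longrightarrow> derivable G (add_mset x A, B)
   \<Longrightarrow> derivable G (add_mset (Conj xs) A, B)"
proof (induction xs)
  case Nil
  then show ?case by simp
next
  case (Cons y ys)
  have "derivable G (add_mset y (add_mset (Conj ys) A), B)"
  proof (cases "x = y")
    case True
    have "derivable G (add_mset (Conj ys) (add_mset y A), B)"
      by (rule derivable_LW) (use Cons.prems True in \<open>auto simp: slang_iff\<close>)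
    then show ?thesis by (simp add: add_mset_commute)
  next
    case False
    then show ?thesis
      using Cons by (auto intro!: derivable_LW simp: slang_iff)
  qed
  with Cons.prems show ?case
    by (auto intro: derivable_LAnd)
qed

lemma derivable_Disj_left:
  "slang G (add_mset (Disj xs) A, B) \<Longrightarrow> (\<And>x. x \<in> set xs \<Longrightarrow> derivable G (add_mset x A, B))
   \<Longrightarrow> derivable G (add_mset (Disj xs) A, B)"
proof (induction xs)
  case Nil
  then show ?case by (auto intro: derivable_bot_axiom)
next
  case (Cons y ys)
  then show ?case
    by (auto intro!: derivable_LOr simp: slang_iff)
qed

lemma derivable_Disj_right:
  "x \<in> set xs \<Longrightarrow> slang G (A, add_mset (Disj xs) B) \<Longrightarrow> derivable G (A, add_mset x B)
   \<Longrightarrow> derivable G (A, add_mset (Disj xs) B)"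
proof (induction xs)
  case Nil
  then show ?case by simp
next
  case (Cons y ys)
  have "derivable G (A, add_mset y (add_mset (Disj ys) B))"
  proof (cases "x = y")
    case True
    have "derivable G (A, add_mset (Disj ys) (add_mset y B))"
      by (rule derivable_RW) (use Cons.prems True in \<open>auto simp: slang_iff\<close>)
    then show ?thesis by (simp add: add_mset_commute)
  next
    case False
    then show ?thesis
      using Cons by (auto intro!: derivable_RW simp: slang_iff)
  qed
  with Cons.prems show ?case
    by (auto intro: derivable_ROr)
qed

section \<open>G3W rule instances\<close>

lemma add_mset_eq_union_cases:
  assumes "add_mset x M = A + B"
  obtains (left) A' where "A = add_mset x A'" "M = A' + B"
  | (right) B' where "B = add_mset x B'" "M = A + B'"
proof -
  have "x \<in># A + B" by (metis assms union_single_eq_member)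
  then consider "x \<in># A" | "x \<in># B" by auto
  then show thesis
  proof cases
    case 1
    then obtain A' where "A = add_mset x A'" by (meson multi_member_split)
    with assms show thesis by (intro left) auto
  next
    case 2
    then obtain B' where "B = add_mset x B'" by (meson multi_member_split)
    with assms show thesis by (intro right) auto
  qed
qed

lemma g3w_inst_union_cases:
  assumes "r \<in> g3w_rules" "inst r ps (A + \<Gamma>, B + \<Delta>)"
  obtains (side) ps' where "inst r ps' (\<Gamma>, \<Delta>)" "ps = map (sprod (A, B)) ps'"
  | (principal) qs where "inst r qs (A, B)" "ps = map (\<lambda>s. sprod s (\<Gamma>, \<Delta>)) qs"
  | (atom_left) q where "Atom q \<in># A" "Atom q \<in># \<Delta>"
  | (atom_right) q where "Atom q \<in># \<Gamma>" "Atom q \<in># B"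
  using assms(2)
proof cases
  case (axat \<Gamma>0 q \<Delta>0)
  then have "Atom q \<in># A + \<Gamma>" "Atom q \<in># B + \<Delta>"
    by simp_all
  then consider "Atom q \<in># A" "Atom q \<in># B" | "Atom q \<in># A" "Atom q \<in># \<Delta>"
    | "Atom q \<in># \<Gamma>" "Atom q \<in># B" | "Atom q \<in># \<Gamma>" "Atom q \<in># \<Delta>" by auto
  then show thesis
  proof cases
    case 1
    then show thesis using axat
      by (intro principal[of "[]"]) (auto dest!: multi_member_split intro: inst.axat[simplified])
  next
    case 4
    then show thesis using axat
      by (intro side[of "[]"]) (auto dest!: multi_member_split intro: inst.axat[simplified])
  qed (fact atom_left atom_right)+
next
  case (axbot \<Gamma>0)
  then have "Bot \<in># A + \<Gamma>" by simp
  then consider "Bot \<in># A" | "Bot \<in># \<Gamma>" by auto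
  then show thesis
  proof cases
    case 1
    then show thesis using axbot
      by (intro principal[of "[]"]) (auto dest!: multi_member_split intro: inst.axbot[simplified])
  next
    case 2
    then show thesis using axbot
      by (intro side[of "[]"]) (auto dest!: multi_member_split intro: inst.axbot[simplified])
  qed
next
  case (land \<Gamma>0 a b)
  then have "add_mset (And a b) \<Gamma>0 = A + \<Gamma>" by simp
  then show thesis
    by (cases rule: add_mset_eq_union_cases;
        use land in \<open>force intro: principal side inst.land[simplified] simp: sprod_def\<close>)
next
  case (rand a \<Delta>0 b)
  then have "add_mset (And a b) \<Delta>0 = B + \<Delta>" by simp
  then show thesis
    by (cases rule: add_mset_eq_union_cases;
        use rand in \<open>force intro: principal side inst.rand[simplified] simp: sprod_def\<close>)
next
  case (lor \<Gamma>0 a b)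
  then have "add_mset (Or a b) \<Gamma>0 = A + \<Gamma>" by simp
  then show thesis
    by (cases rule: add_mset_eq_union_cases;
        use lor in \<open>force intro: principal side inst.lor[simplified] simp: sprod_def\<close>)
next
  case (ror a b \<Delta>0)
  then have "add_mset (Or a b) \<Delta>0 = B + \<Delta>" by simp
  then show thesis
    by (cases rule: add_mset_eq_union_cases;
        use ror in \<open>force intro: principal side inst.ror[simplified] simp: sprod_def\<close>)
next
  case (limp \<Gamma>0 a b)
  then have "add_mset (Imp a b) \<Gamma>0 = A + \<Gamma>" by simp
  then show thesis
    by (cases rule: add_mset_eq_union_cases;
        use limp in \<open>force intro: principal side inst.limp[simplified] simp: sprod_def\<close>)
next
  case (rimp a b \<Delta>0)
  then have "add_mset (Imp a b) \<Delta>0 = B + \<Delta>" by simp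
  then show thesis
    by (cases rule: add_mset_eq_union_cases;
        use rimp in \<open>force intro: principal side inst.rimp[simplified] simp: sprod_def\<close>)
next
  case (lw \<Gamma>0 a)
  then have "add_mset (a) \<Gamma>0 = A + \<Gamma>" by simp
  then show thesis
    by (cases rule: add_mset_eq_union_cases;
        use lw in \<open>force intro: principal side inst.lw[simplified] simp: sprod_def\<close>)
next
  case (rw \<Delta>0 a)
  then have "add_mset (a) \<Delta>0 = B + \<Delta>" by simp
  then show thesis
    by (cases rule: add_mset_eq_union_cases;
        use rw in \<open>force intro: principal side inst.rw[simplified] simp: sprod_def\<close>)
qed (use assms(1) in \<open>simp_all add: g3w_rules_def\<close>)

text \<open>Weakening need not lower the weight, hence the size as second component.\<close>

definition lower_seq :: "(seq \<times> seq) set" where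
  "lower_seq = measures [sweight, \<lambda>S. size (fst S) + size (snd S)]"

lemma wf_lower_seq: "wf lower_seq"
  by (simp add: lower_seq_def)

lemma lower_seqI: "sweight S' < sweight S \<Longrightarrow> (S', S) \<in> lower_seq"
  by (simp add: lower_seq_def)

lemma g3w_premise_slang:
  "inst r ps c \<Longrightarrow> r \<in> g3w_rules \<Longrightarrow> s \<in> set ps \<Longrightarrow> slang G c \<Longrightarrow> slang G s"
  by (induction rule: inst.induct) (auto simp: slang_iff g3w_rules_def)

lemma g3w_premise_svars:
  "inst r ps c \<Longrightarrow> r \<in> g3w_rules \<Longrightarrow> s \<in> set ps \<Longrightarrow> svars b s \<subseteq> svars b c"
  by (induction rule: inst.induct) (auto simp: svars_def g3w_rules_def)

lemma g3w_premise_lower: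
  "inst r ps c \<Longrightarrow> r \<in> g3w_rules \<Longrightarrow> s \<in> set ps \<Longrightarrow> (s, c) \<in> lower_seq"
  by (induction rule: inst.induct) (auto simp: lower_seq_def sweight_def g3w_rules_def)

lemma g3w_inst_sprod:
  "inst r ps c \<Longrightarrow> r \<in> g3w_rules \<Longrightarrow> inst r (map (\<lambda>s. sprod s T) ps) (sprod c T)"
  by (induction rule: inst.induct)
    (auto simp: sprod_def g3w_rules_def ac_simps intro: inst.intros[simplified])

lemma derivable_g3w_add_succedent:
  assumes "r \<in> g3w_rules" "inst r ps c" "slang G c" "lang G \<theta>"
    and "\<And>s. s \<in> set ps \<Longrightarrow> derivable G (fst s, add_mset \<theta> (snd s))"
  shows "derivable G (fst c, add_mset \<theta> (snd c))"
proof -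
  have "derivable G (sprod c ({#}, {#\<theta>#}))"
    using assms by (intro derivable_g3w[OF assms(1) g3w_inst_sprod[OF assms(2,1)]])
      (auto simp: sprod_def slang_def)
  then show ?thesis by (simp add: sprod_def)
qed

fun direct_subfms :: "fm \<Rightarrow> fm set" where
  "direct_subfms (And a b) = {a, b}"
| "direct_subfms (Or a b) = {a, b}"
| "direct_subfms (Imp a b) = {a, b}"
| "direct_subfms _ = {}"

definition seq_fms :: "seq \<Rightarrow> fm set" where
  "seq_fms S = set_mset (fst S) \<union> set_mset (snd S)"

lemma g3w_premise_length: "inst r ps c \<Longrightarrow> r \<in> g3w_rules \<Longrightarrow> length ps \<le> 2"
  by (induction rule: inst.induct) (simp_all add: g3w_rules_def)

lemma g3w_premise_size:
  "inst r ps c \<Longrightarrow> r \<in> g3w_rules \<Longrightarrow> s \<in> set ps \<Longrightarrow>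
   size (fst s) \<le> size (fst c) + 1 \<and> size (snd s) \<le> size (snd c) + 1"
  by (induction rule: inst.induct) (auto simp: g3w_rules_def)

lemma g3w_premise_fms:
  "inst r ps c \<Longrightarrow> r \<in> g3w_rules \<Longrightarrow> s \<in> set ps \<Longrightarrow>
   seq_fms s \<subseteq> seq_fms c \<union> \<Union>(direct_subfms ` seq_fms c)"
  by (induction rule: inst.induct) (auto simp: g3w_rules_def seq_fms_def)

lemma finite_bounded_msets: "finite F \<Longrightarrow> finite {M. set_mset M \<subseteq> F \<and> size M \<le> n}"
proof -
  assume "finite F"
  moreover have "{M. set_mset M \<subseteq> F \<and> size M \<le> n} = (\<Union>k\<le>n. multisets_of_size F k)"
    by (auto simp: multisets_of_size_def)
  ultimately show ?thesis by auto
qed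

lemma finite_g3w_premises: "finite {ps. \<exists>r\<in>g3w_rules. inst r ps c}"
proof -
  define F where "F = seq_fms c \<union> \<Union>(direct_subfms ` seq_fms c)"
  define P where "P = {M. set_mset M \<subseteq> F \<and> size M \<le> size (fst c) + 1}
                    \<times> {M. set_mset M \<subseteq> F \<and> size M \<le> size (snd c) + 1}"
  have "finite (direct_subfms x)" for x by (cases x) auto
  then have "finite F" by (simp add: F_def seq_fms_def)
  then have "finite {ps. set ps \<subseteq> P \<and> length ps \<le> 2}"
    by (simp add: P_def finite_bounded_msets finite_lists_length_le)
  moreover have "{ps. \<exists>r\<in>g3w_rules. inst r ps c} \<subseteq> {ps. set ps \<subseteq> P \<and> length ps \<le> 2}"
  proof clarify
    fix ps r assume r: "r \<in> g3w_rules" "inst r ps c"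
    have "s \<in> P" if "s \<in> set ps" for s
      using g3w_premise_size[OF r(2,1) that] g3w_premise_fms[OF r(2,1) that]
      by (cases s) (auto simp: P_def F_def seq_fms_def)
    with g3w_premise_length[OF r(2,1)] show "set ps \<subseteq> P \<and> length ps \<le> 2" by blast
  qed
  ultimately show ?thesis by (rule finite_subset[rotated])
qed

section \<open>Uniform interpolants\<close>

definition fm_free :: "bool \<Rightarrow> nat \<Rightarrow> bool \<Rightarrow> fm \<Rightarrow> bool" where
  "fm_free lyn p pol \<phi> \<longleftrightarrow> (if lyn then p \<notin> vars pol \<phi> else p \<notin> allvars \<phi>)"

definition seq_free :: "bool \<Rightarrow> nat \<Rightarrow> bool \<Rightarrow> seq \<Rightarrow> bool" where
  "seq_free lyn p pol X \<longleftrightarrow> (if lyn then p \<notin> svars (\<not> pol) X else p \<notin> sallvars X)"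

definition vars_within :: "bool \<Rightarrow> seq \<Rightarrow> fm \<Rightarrow> bool" where
  "vars_within lyn S \<phi> \<longleftrightarrow>
     (if lyn then \<forall>b. vars b \<phi> \<subseteq> svars b S else allvars \<phi> \<subseteq> sallvars S)"

text \<open>One notion for both properties: \<open>lyn\<close> selects the polarised variable conditions of ULI or
  the unpolarised ones of UI, and \<open>D\<close> selects which derivable products
  \<open>S\<cdot>(\<Gamma> \<Rightarrow> \<Delta>)\<close> have to be covered: all of them, or those whose last inference is modal.\<close>

definition uniform_interpolant ::
    "calculus \<Rightarrow> bool \<Rightarrow> nat \<Rightarrow> bool \<Rightarrow> (seq \<Rightarrow> bool) \<Rightarrow> seq \<Rightarrow> fm \<Rightarrow> bool" where
  "uniform_interpolant G lyn p pol D S \<theta> \<longleftrightarrow>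
     lang G \<theta> \<and> fm_free lyn p pol \<theta> \<and> vars_within lyn S \<theta> \<and>
     derivable G (add_mset \<theta> (fst S), snd S) \<and>
     (\<forall>\<Gamma> \<Delta>. slang G (\<Gamma>, \<Delta>) \<longrightarrow> seq_free lyn p pol (\<Gamma>, \<Delta>) \<longrightarrow> D (sprod S (\<Gamma>, \<Delta>))
        \<longrightarrow> derivable G (\<Gamma>, add_mset \<theta> \<Delta>))"

lemma ULI_iff: "ULI G p pol S \<theta> \<longleftrightarrow> uniform_interpolant G True p pol (derivable G) S \<theta>"
  by (auto simp: ULI_def ULI_base_def uniform_interpolant_def fm_free_def vars_within_def
      seq_free_def sprod_def)

lemma ULI_wrt_iff:
  "ULI_wrt G R p pol S \<theta> \<longleftrightarrow> uniform_interpolant G True p pol (derivable_last G R) S \<theta>"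
  by (auto simp: ULI_wrt_def ULI_base_def uniform_interpolant_def fm_free_def vars_within_def
      seq_free_def sprod_def)

lemma UI_iff: "UI G p S \<theta> \<longleftrightarrow> uniform_interpolant G False p pol (derivable G) S \<theta>"
  by (auto simp: UI_def UI_base_def uniform_interpolant_def fm_free_def vars_within_def
      seq_free_def sprod_def)

lemma UI_wrt_iff:
  "UI_wrt G R p S \<theta> \<longleftrightarrow> uniform_interpolant G False p pol (derivable_last G R) S \<theta>"
  by (auto simp: UI_wrt_def UI_base_def uniform_interpolant_def fm_free_def vars_within_def
      seq_free_def sprod_def)

lemma fm_free_Conj [simp]: "fm_free lyn p pol (Conj xs) \<longleftrightarrow> (\<forall>x\<in>set xs. fm_free lyn p pol x)"
  by (auto simp: fm_free_def allvars_def)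

lemma fm_free_Disj [simp]: "fm_free lyn p pol (Disj xs) \<longleftrightarrow> (\<forall>x\<in>set xs. fm_free lyn p pol x)"
  by (auto simp: fm_free_def allvars_def)

lemma vars_within_Conj [simp]: "vars_within lyn S (Conj xs) \<longleftrightarrow> (\<forall>x\<in>set xs. vars_within lyn S x)"
  by (auto simp: vars_within_def allvars_def)

lemma vars_within_Disj [simp]: "vars_within lyn S (Disj xs) \<longleftrightarrow> (\<forall>x\<in>set xs. vars_within lyn S x)"
  by (auto simp: vars_within_def allvars_def)

lemma vars_within_mono:
  "vars_within lyn S' \<phi> \<Longrightarrow> (\<And>b. svars b S' \<subseteq> svars b S) \<Longrightarrow> vars_within lyn S \<phi>"
  unfolding vars_within_def sallvars_def by (cases lyn) auto

lemma seq_free_mono: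
  "seq_free lyn p pol X \<Longrightarrow> (\<And>b. svars b X' \<subseteq> svars b X) \<Longrightarrow> seq_free lyn p pol X'"
  unfolding seq_free_def sallvars_def by (cases lyn) auto

lemma vars_within_neg_atom: "Atom q \<in># fst S \<Longrightarrow> vars_within lyn S (Imp (Atom q) Bot)"
  by (force simp: vars_within_def allvars_def svars_def sallvars_def)

lemma vars_within_atom: "Atom q \<in># snd S \<Longrightarrow> vars_within lyn S (Atom q)"
  by (force simp: vars_within_def allvars_def svars_def sallvars_def)

lemma fm_free_neg_atom:
  "seq_free lyn p pol X \<Longrightarrow> Atom q \<in># snd X \<Longrightarrow> fm_free lyn p pol (Imp (Atom q) Bot)"
  by (force simp: seq_free_def fm_free_def allvars_def svars_def sallvars_def split: if_splits)

lemma fm_free_atom: "seq_free lyn p pol X \<Longrightarrow> Atom q \<in># fst X \<Longrightarrow> fm_free lyn p pol (Atom q)"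
  by (force simp: seq_free_def fm_free_def allvars_def svars_def sallvars_def split: if_splits)

section \<open>The interpolant of a sequent\<close>

locale interpolation_step =
  fixes G :: calculus and lyn :: bool and p :: nat and pol :: bool and S :: seq
    and I :: "seq \<Rightarrow> fm" and \<theta>M :: fm
  assumes slang_S: "slang G S"
    and lower_interpolants: "\<And>S'. (S', S) \<in> lower_seq \<Longrightarrow> slang G S' \<Longrightarrow>
      uniform_interpolant G lyn p pol (derivable G) S' (I S')"
    and modal_interpolant: "uniform_interpolant G lyn p pol (derivable_last G (modal_rules G)) S \<theta>M"
begin

definition candidates :: "fm set" where
  "candidates = insert \<theta>M ((\<lambda>qs. Conj (map I qs)) ` {qs. \<exists>r\<in>g3w_rules. inst r qs S}
     \<union> {Imp (Atom q) Bot | q. Atom q \<in># fst S} \<union> {Atom q | q. Atom q \<in># snd S})"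

lemma finite_candidates: "finite candidates"
proof -
  have "finite {Imp (Atom q) Bot | q. Atom q \<in># fst S}"
    by (rule finite_subset[of _ "(\<lambda>x. Imp x Bot) ` set_mset (fst S)"]) auto
  moreover have "finite {Atom q | q. Atom q \<in># snd S}"
    by (rule finite_subset[of _ "set_mset (snd S)"]) auto
  ultimately show ?thesis
    by (simp add: candidates_def finite_g3w_premises)
qed

lemma premise_interpolant:
  assumes "inst r qs S" "r \<in> g3w_rules" "q \<in> set qs"
  shows "uniform_interpolant G lyn p pol (derivable G) q (I q)"
  using assms slang_S by (blast intro: lower_interpolants g3w_premise_lower g3w_premise_slang)

lemma Conj_candidate_sound:
  assumes r: "inst r qs S" "r \<in> g3w_rules"
  defines "c \<equiv> Conj (map I qs)"
  shows "lang G c \<and> vars_within lyn S c \<and> derivable G (add_mset c (fst S), snd S)"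
proof -
  note ui = premise_interpolant[OF r]
  have lang_c: "lang G c"
    using ui by (auto simp: c_def uniform_interpolant_def)
  have "vars_within lyn S (I q)" if "q \<in> set qs" for q
    using vars_within_mono[OF _ g3w_premise_svars[OF r that]] ui[OF that]
    by (simp add: uniform_interpolant_def)
  then have "vars_within lyn S c"
    by (simp add: c_def)
  moreover have "derivable G (sprod S ({#c#}, {#}))"
  proof (rule derivable_g3w[OF r(2) g3w_inst_sprod[OF r]])
    show "slang G (sprod S ({#c#}, {#}))"
      using slang_S lang_c by (cases S) (auto simp: sprod_def slang_iff)
    fix s assume "s \<in> set (map (\<lambda>s. sprod s ({#c#}, {#})) qs)"
    then obtain q where q: "q \<in> set qs" and s: "s = (add_mset c (fst q), snd q)"
      by (auto simp: sprod_def)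
    have "slang G q" using g3w_premise_slang[OF r q slang_S] .
    then show "derivable G s"
      unfolding s c_def using ui[OF q] q lang_c
      by (intro derivable_Conj_left[of "I q"]) (auto simp: uniform_interpolant_def slang_def c_def)
  qed
  ultimately show ?thesis
    using lang_c by (simp add: sprod_def)
qed

lemma candidate_sound:
  assumes "c \<in> candidates"
  shows "lang G c \<and> vars_within lyn S c \<and> derivable G (add_mset c (fst S), snd S)"
  using assms unfolding candidates_def
proof (elim insertE UnE imageE CollectE exE conjE bexE)
  assume "c = \<theta>M"
  then show ?thesis using modal_interpolant by (simp add: uniform_interpolant_def)
next
  fix qs r assume "c = Conj (map I qs)" "r \<in> g3w_rules" "inst r qs S"
  then show ?thesis using Conj_candidate_sound by blast
next
  fix q assume c: "c = Imp (Atom q) Bot" and q: "Atom q \<in># fst S"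
  have "derivable G (add_mset (Imp (Atom q) Bot) (fst S), snd S)"
    using slang_S q
    by (intro derivable_LImp derivable_atom_axiom[of _ _ _ q] derivable_bot_axiom)
      (auto simp: slang_def)
  then show ?thesis using c q by (simp add: vars_within_neg_atom)
next
  fix q assume c: "c = Atom q" and q: "Atom q \<in># snd S"
  have "derivable G (add_mset (Atom q) (fst S), snd S)"
    using slang_S q by (intro derivable_atom_axiom[of _ _ _ q]) (auto simp: slang_def)
  then show ?thesis using c q by (simp add: vars_within_atom)
qed

definition disjuncts :: "fm list" where
  "disjuncts = (SOME cs. set cs = {c \<in> candidates. fm_free lyn p pol c})"

lemma set_disjuncts: "set disjuncts = {c \<in> candidates. fm_free lyn p pol c}"
  unfolding disjuncts_def by (rule someI_ex) (simp add: finite_candidates finite_list)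

definition interpolant :: fm where
  "interpolant = Disj disjuncts"

lemma interpolant_sound:
  "lang G interpolant \<and> fm_free lyn p pol interpolant \<and> vars_within lyn S interpolant \<and>
   derivable G (add_mset interpolant (fst S), snd S)"
  using candidate_sound slang_S unfolding interpolant_def
  by (auto simp: set_disjuncts slang_def intro!: derivable_Disj_left)

lemma interpolant_from_candidate:
  assumes "c \<in> candidates" "fm_free lyn p pol c" "slang G (\<Gamma>, \<Delta>)" "derivable G (\<Gamma>, add_mset c \<Delta>)"
  shows "derivable G (\<Gamma>, add_mset interpolant \<Delta>)"
  unfolding interpolant_def
  by (rule derivable_Disj_right[of c]) (use assms interpolant_sound in \<open>auto simp: set_disjuncts slang_def interpolant_def\<close>)

lemma interpolant_modal_case:
  assumes "derivable_last G (modal_rules G) (sprod S X)" "slang G X" "seq_free lyn p pol X"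
  shows "derivable G (fst X, add_mset interpolant (snd X))"
proof -
  have "derivable G (fst X, add_mset \<theta>M (snd X))"
    using modal_interpolant assms by (cases X) (simp add: uniform_interpolant_def)
  then show ?thesis
    using modal_interpolant assms(2)
    by (cases X) (auto simp: candidates_def uniform_interpolant_def intro: interpolant_from_candidate)
qed

lemma interpolant_principal_case:
  assumes r: "inst r qs S" "r \<in> g3w_rules"
    and prems: "\<And>q. q \<in> set qs \<Longrightarrow> derivable G (sprod q X)"
    and X: "slang G X" "seq_free lyn p pol X"
  shows "derivable G (fst X, add_mset interpolant (snd X))"
proof -
  note ui = premise_interpolant[OF r]
  have "derivable G (fst X, add_mset (I q) (snd X))" if "q \<in> set qs" for q
    using ui[OF that] prems[OF that] X by (cases X) (auto simp: uniform_interpolant_def)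
  then have "derivable G (fst X, add_mset (Conj (map I qs)) (snd X))"
    using ui X by (cases X) (auto intro!: derivable_Conj_right simp: slang_iff uniform_interpolant_def)
  moreover have "Conj (map I qs) \<in> candidates"
    using r by (auto simp: candidates_def)
  moreover have "fm_free lyn p pol (Conj (map I qs))"
    using ui by (auto simp: uniform_interpolant_def)
  ultimately show ?thesis
    using X(1) by (intro interpolant_from_candidate) auto
qed

lemma interpolant_atom_left_case:
  assumes "Atom q \<in># fst S" "Atom q \<in># snd X" "slang G X" "seq_free lyn p pol X"
  shows "derivable G (fst X, add_mset interpolant (snd X))"
proof (rule interpolant_from_candidate[of "Imp (Atom q) Bot"])
  show "derivable G (fst X, add_mset (Imp (Atom q) Bot) (snd X))"
    using assms(2,3)
    by (intro derivable_RImp derivable_atom_axiom[of _ _ _ q]) (auto simp: slang_def)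
qed (use assms in \<open>auto simp: candidates_def slang_def intro: fm_free_neg_atom\<close>)

lemma interpolant_atom_right_case:
  assumes "Atom q \<in># snd S" "Atom q \<in># fst X" "slang G X" "seq_free lyn p pol X"
  shows "derivable G (fst X, add_mset interpolant (snd X))"
proof (rule interpolant_from_candidate[of "Atom q"])
  show "derivable G (fst X, add_mset (Atom q) (snd X))"
    using assms(2,3) by (intro derivable_atom_axiom[of _ _ _ q]) (auto simp: slang_def)
qed (use assms in \<open>auto simp: candidates_def slang_def intro: fm_free_atom\<close>)

lemma interpolant_complete:
  assumes "derivable G (sprod S X)" "slang G X" "seq_free lyn p pol X"
  shows "derivable G (fst X, add_mset interpolant (snd X))"
proof -
  have "\<forall>X. c = sprod S X \<longrightarrow> slang G X \<longrightarrow> seq_free lyn p pol X \<longrightarrow>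
          derivable G (fst X, add_mset interpolant (snd X))" if "derivable G c" for c
    using that
  proof induction
    case (step r ps c)
    show ?case
    proof (intro allI impI)
      fix X assume c: "c = sprod S X" and X: "slang G X" "seq_free lyn p pol X"
      consider (modal) "r \<in> modal_rules G" | (g3w) "r \<in> g3w_rules"
        using step.hyps(1) by (auto simp: rules_def)
      then show "derivable G (fst X, add_mset interpolant (snd X))"
      proof cases
        case modal
        then have "derivable_last G (modal_rules G) (sprod S X)"
          using step.hyps c unfolding derivable_last_def by blast
        then show ?thesis using X by (rule interpolant_modal_case)
      next
        case g3w
        have "inst r ps (fst S + fst X, snd S + snd X)" using step.hyps(2) c by (simp add: sprod_def)
        with g3w show ?thesis
        proof (cases rule: g3w_inst_union_cases)
          case (side ps')
          show ?thesis
          proof (rule derivable_g3w_add_succedent[OF g3w side(1)[simplified]])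
            fix s' assume s': "s' \<in> set ps'"
            have "slang G s'" "seq_free lyn p pol s'"
              using g3w_premise_slang[OF side(1) g3w s'] g3w_premise_svars[OF side(1) g3w s'] X
              by (auto intro: seq_free_mono)
            then show "derivable G (fst s', add_mset interpolant (snd s'))"
              using step.IH[of "sprod S s'"] s' side(2) by (auto simp: sprod_def)
          qed (use X interpolant_sound in auto)
        next
          case (principal qs)
          have "derivable G (sprod q X)" if "q \<in> set qs" for q
            using step.hyps(4) principal(2) that by auto
          then show ?thesis
            using interpolant_principal_case[OF _ g3w] principal(1) X by simp
        next
          case (atom_left q)
          then show ?thesis using interpolant_atom_left_case X by blast
        next
          case (atom_right q)
          then show ?thesis using interpolant_atom_right_case X by blast
        qed
      qed
    qed
  qed
  with assms show ?thesis by blast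
qed

lemma uniform_interpolant_interpolant:
  "uniform_interpolant G lyn p pol (derivable G) S interpolant"
  using interpolant_sound interpolant_complete by (auto simp: uniform_interpolant_def)

end

lemma uniform_interpolant_exists:
  assumes "slang G S"
    and modal: "\<And>S. slang G S \<Longrightarrow>
      \<forall>S'. slang G S' \<longrightarrow> sweight S' < sweight S \<longrightarrow>
         (\<exists>\<theta>. uniform_interpolant G lyn p pol (derivable G) S' \<theta>) \<Longrightarrow>
      \<exists>\<theta>. uniform_interpolant G lyn p pol (derivable_last G (modal_rules G)) S \<theta>"
  shows "\<exists>\<theta>. uniform_interpolant G lyn p pol (derivable G) S \<theta>"
  using assms(1)
proof (induction S rule: wf_induct_rule[OF wf_lower_seq])
  case (1 S)
  define I where "I S' = (SOME \<theta>. uniform_interpolant G lyn p pol (derivable G) S' \<theta>)" for S'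
  have lower: "uniform_interpolant G lyn p pol (derivable G) S' (I S')"
    if "(S', S) \<in> lower_seq" "slang G S'" for S'
    unfolding I_def using 1 that by (blast intro: someI_ex)
  obtain \<theta>M where "uniform_interpolant G lyn p pol (derivable_last G (modal_rules G)) S \<theta>M"
    using modal[OF "1.prems"] 1 lower_seqI by blast
  then interpret interpolation_step G lyn p pol S I \<theta>M
    using "1.prems" lower by unfold_locales
  show ?case using uniform_interpolant_interpolant by blast
qed

lemma ULIP_if_MULIP: "MULIP G \<Longrightarrow> ULIP G"
  unfolding ULIP_def ULI_iff
proof (intro allI impI)
  fix S p pol
  assume "MULIP G" "slang G S"
  then show "\<exists>\<theta>. uniform_interpolant G True p pol (derivable G) S \<theta>"
    by (intro uniform_interpolant_exists) (auto simp: MULIP_def Ucond_def ULI_iff ULI_wrt_iff)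
qed

lemma UIP_if_MUIP: "MUIP G \<Longrightarrow> UIP G"
  unfolding UIP_def UI_iff[where pol = True]
proof (intro allI impI)
  fix S p
  assume "MUIP G" "slang G S"
  then show "\<exists>\<theta>. uniform_interpolant G False p True (derivable G) S \<theta>"
    by (intro uniform_interpolant_exists)
      (auto simp: MUIP_def Ucond_np_def UI_iff[where pol = True] UI_wrt_iff[where pol = True])
qed

theorem mainTheorem6:
  fixes G :: calculus
  shows "(MULIP G \<longrightarrow> ULIP G) \<and> (MUIP G \<longrightarrow> UIP G)"
  using ULIP_if_MULIP UIP_if_MUIP by blast

end
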